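(* Let $s,k$ be positive integers and $\epsilon\in(0,1)$. Then for all sufficiently large $n$ there exist sets $A,B\subseteq\mathbb{Z}$ with $|A|=|B|=n$ and $|A+B|>kn$ such that for every subset $B_{(s)}\subseteq B$ with $|B_{(s)}|\le s$ we have $|A+B_{(s)}|\le(2+\epsilon)n$.
   Context: For subsets $X,Y$ of an abelian group, $X+Y=\{x+y:x\in X,y\in Y\}$. *)

theory Defs
  imports Complex_Main
begin

definition sumset :: "int set \<Rightarrow> int set \<Rightarrow> int set" where
  "sumset X Y = {x + y | x y. x \<in> X \<and> y \<in> Y}"

end

theory Submission
  imports Defs
begin

text \<open>Take \<open>B = [0, n)\<close> and let \<open>A\<close> be the interval \<open>[0, n - m)\<close> together with the
  \<open>m\<close> multiples \<open>n, 2n, \<dots>, mn\<close>. The multiples make \<open>A + B\<close> contain \<open>[n, (m+1)n)\<close>, so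
  \<open>|A + B| \<ge> mn\<close>; but for \<open>|B'| \<le> s\<close> the interval part contributes at most \<open>2n\<close> sums and
  the multiples at most \<open>ms\<close>, which is \<open>\<le> \<epsilon>n\<close> once \<open>n\<close> is large. Take \<open>m = k + 1\<close>.\<close>

lemma sumset_eq_image: "sumset X Y = (\<lambda>(x, y). x + y) ` (X \<times> Y)"
  unfolding sumset_def by auto

lemma finite_sumset: "finite X \<Longrightarrow> finite Y \<Longrightarrow> finite (sumset X Y)"
  unfolding sumset_eq_image by simp

lemma card_sumset_le_mult:
  assumes "finite X" "finite Y"
  shows "card (sumset X Y) \<le> card X * card Y"
  unfolding sumset_eq_image card_cartesian_product[symmetric]
  using assms by (intro card_image_le) simp

lemma sumset_Un_left: "sumset (X \<union> Z) Y = sumset X Y \<union> sumset Z Y"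
  unfolding sumset_def by auto

lemma sumset_subset_atLeastLessThan:
  assumes "X \<subseteq> {0..<a}" "Y \<subseteq> {0..<b}"
  shows "sumset X Y \<subseteq> {0..<a + b}"
  using assms unfolding sumset_def by fastforce

definition interval_with_multiples :: "nat \<Rightarrow> nat \<Rightarrow> int set" where
  "interval_with_multiples n m = {0..<int n - int m} \<union> (\<lambda>j. int n * int j) ` {1..m}"

lemma finite_interval_with_multiples: "finite (interval_with_multiples n m)"
  unfolding interval_with_multiples_def by simp

lemma card_interval_with_multiples:
  assumes "m < n"
  shows "card (interval_with_multiples n m) = n"
proof -
  have disjoint: "{0..<int n - int m} \<inter> (\<lambda>j. int n * int j) ` {1..m} = {}"
  proof -
    have "int n \<le> int n * int j" if "1 \<le> j" for j
      using that by (simp add: mult_le_cancel_left1)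
    then show ?thesis by force
  qed
  have "card ((\<lambda>j. int n * int j) ` {1..m}) = m"
    using assms by (subst card_image) (auto simp: inj_on_def)
  then show ?thesis
    unfolding interval_with_multiples_def using assms
    by (subst card_Un_disjoint[OF _ _ disjoint]) auto
qed

lemma atLeastLessThan_subset_sumset_interval_with_multiples:
  assumes "0 < n"
  shows "{int n..<int n * (int m + 1)} \<subseteq> sumset (interval_with_multiples n m) {0..<int n}"
proof
  fix x assume x: "x \<in> {int n..<int n * (int m + 1)}"
  define q where "q = x div int n"
  have decomp: "x = int n * q + x mod int n"
    unfolding q_def by (simp add: mult.commute)
  have "1 \<le> q"
    using x assms zdiv_mono1[of "int n" x "int n"] unfolding q_def by simp
  moreover have "q \<le> int m"
  proof -
    have "0 \<le> x mod int n" "x < int n * (int m + 1)" using x assms by auto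
    then have "int n * q < int n * (int m + 1)" using decomp by linarith
    then show ?thesis using assms by (simp add: mult_less_cancel_left_pos)
  qed
  ultimately have "int n * q \<in> interval_with_multiples n m"
    unfolding interval_with_multiples_def
    by (auto intro!: image_eqI[of _ _ "nat q"])
  moreover have "x mod int n \<in> {0..<int n}" using assms by simp
  ultimately show "x \<in> sumset (interval_with_multiples n m) {0..<int n}"
    using decomp unfolding sumset_def by blast
qed

lemma card_sumset_interval_with_multiples_ge:
  assumes "0 < n"
  shows "m * n \<le> card (sumset (interval_with_multiples n m) {0..<int n})"
proof -
  have "m * n = card {int n..<int n * (int m + 1)}"
    by (simp add: algebra_simps nat_mult_distrib)
  also have "\<dots> \<le> card (sumset (interval_with_multiples n m) {0..<int n})"
    using atLeastLessThan_subset_sumset_interval_with_multiples[OF assms, of m]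
    by (intro card_mono) (simp_all add: finite_sumset finite_interval_with_multiples)
  finally show ?thesis .
qed

lemma card_sumset_interval_with_multiples_le:
  assumes "B \<subseteq> {0..<int n}" "finite B"
  shows "card (sumset (interval_with_multiples n m) B) \<le> 2 * n + m * card B"
proof -
  let ?I = "{0..<int n - int m}" and ?M = "(\<lambda>j. int n * int j) ` {1..m}"
  have "sumset ?I B \<subseteq> {0..<int n + int n}"
    using assms(1) by (intro sumset_subset_atLeastLessThan) auto
  then have "card (sumset ?I B) \<le> card {0..<int n + int n}"
    by (intro card_mono) simp_all
  then have interval_part: "card (sumset ?I B) \<le> 2 * n"
    by simp
  have "card (sumset ?M B) \<le> card ?M * card B"
    using assms(2) by (intro card_sumset_le_mult) simp_all
  also have "\<dots> \<le> m * card B"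
    using card_image_le[of "{1..m}" "\<lambda>j. int n * int j"] by simp
  finally have multiples_part: "card (sumset ?M B) \<le> m * card B" .
  have "card (sumset (interval_with_multiples n m) B) \<le> card (sumset ?I B) + card (sumset ?M B)"
    unfolding interval_with_multiples_def sumset_Un_left by (rule card_Un_le)
  with interval_part multiples_part show ?thesis by linarith
qed

theorem proposition2p5:
  fixes s k :: nat and \<epsilon> :: real
  assumes "s > 0" and "k > 0" and "0 < \<epsilon>" and "\<epsilon> < 1"
  shows "\<forall>\<^sub>F n in sequentially. \<exists>A B :: int set.
           finite A \<and> finite B \<and> card A = n \<and> card B = n \<and>
           card (sumset A B) > k * n \<and>
           (\<forall>B'. B' \<subseteq> B \<and> card B' \<le> s \<longrightarrow>
                 real (card (sumset A B')) \<le> (2 + \<epsilon>) * real n)"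
proof -
  define m where "m = k + 1"
  obtain N :: nat where "real (m * s) / \<epsilon> < N"
    using reals_Archimedean2 by blast
  then have "real (m * s) \<le> \<epsilon> * real N"
    using assms(3) by (simp add: field_simps)
  then have "\<forall>\<^sub>F n in sequentially. real (m * s) \<le> \<epsilon> * real n"
    using eventually_ge_at_top[of N] assms(3)
    by (elim eventually_mono) (smt (verit) mult_left_mono of_nat_mono)
  moreover have "\<forall>\<^sub>F n in sequentially. m < n" by (rule eventually_gt_at_top)
  ultimately show ?thesis
  proof eventually_elim
    case (elim n)
    let ?A = "interval_with_multiples n m" and ?B = "{0..<int n}"
    have "k * n < m * n"
      using elim by (simp add: m_def)
    also have "\<dots> \<le> card (sumset ?A ?B)"
      using elim by (intro card_sumset_interval_with_multiples_ge) simp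
    finally have "k * n < card (sumset ?A ?B)" .
    moreover have "real (card (sumset ?A B')) \<le> (2 + \<epsilon>) * real n"
      if "B' \<subseteq> ?B" "card B' \<le> s" for B'
    proof -
      have "finite B'" using that(1) by (rule finite_subset) simp
      then have "card (sumset ?A B') \<le> 2 * n + m * card B'"
        using that(1) by (intro card_sumset_interval_with_multiples_le)
      also have "\<dots> \<le> 2 * n + m * s"
        using that(2) by simp
      finally have "real (card (sumset ?A B')) \<le> 2 * real n + real (m * s)"
        by linarith
      then show ?thesis using elim by (simp add: algebra_simps)
    qed
    ultimately show ?case
      using card_interval_with_multiples[of m n] elim finite_interval_with_multiples
      by (intro exI[of _ ?A] exI[of _ ?B]) simp
  qed
qed

end
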